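(* Let $k\geq 1$ and let $T$ and $T'$ be binary phylogenetic $X$-trees with $|X|=2k$. Let $P_1,\ldots,P_k$ and $P'_1,\ldots,P'_k$ be the unique sets of $k$ pairwise edge-disjoint leaf-to-leaf paths in $T$ and $T'$, respectively. Let $\mathcal{E}=\{\{a_i,b_i\}: a_i,b_i \text{ are the endpoints of } P_i,\ 1\le i\le k\}$ and $\mathcal{E}'=\{\{a'_i,b'_i\}: a'_i,b'_i \text{ are the endpoints of } P'_i,\ 1\le i\le k\}$. Then $A_k(T)=A_k(T')$ if and only if $\mathcal{E}=\mathcal{E}'$.
   Context: A phylogenetic $X$-tree is a tree with no vertices of degree 2 whose leaves are bijectively labelled by (and identified with) $X$; binary means maximum degree 3. A leaf-to-leaf path is a path whose two endpoints are (distinct) leaves. When $|X|=2k$, a binary phylogenetic $X$-tree contains exactly one set of $k$ pairwise edge-disjoint leaf-to-leaf paths. For a binary character $f: X\to\{a,b\}$, $l(f,T)$ is the minimum, over all maps $g:V(T)\to\{a,b\}$ with $g|_X=f$, of the number of edges $\{u,v\}$ with $g(u)\ne g(v)$; $A_k(T)$ is the set of all binary characters $f$ on $X$ with $l(f,T)=k$. *)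

theory Defs
  imports Main "HOL-Library.FuncSet"
begin

definition graph :: "'v set \<Rightarrow> 'v set set \<Rightarrow> bool" where
  "graph V E \<longleftrightarrow> finite V \<and> (\<forall>e\<in>E. \<exists>u v. e = {u, v} \<and> u \<noteq> v \<and> u \<in> V \<and> v \<in> V)"

definition is_path :: "'v set set \<Rightarrow> 'v list \<Rightarrow> bool" where
  "is_path E p \<longleftrightarrow> p \<noteq> [] \<and> distinct p \<and> (\<forall>i. Suc i < length p \<longrightarrow> {p ! i, p ! Suc i} \<in> E)"

definition connected_graph :: "'v set \<Rightarrow> 'v set set \<Rightarrow> bool" where
  "connected_graph V E \<longleftrightarrow>
     (\<forall>u\<in>V. \<forall>v\<in>V. \<exists>p. is_path E p \<and> hd p = u \<and> last p = v)"

definition has_cycle :: "'v set set \<Rightarrow> bool" where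
  "has_cycle E \<longleftrightarrow> (\<exists>c. 3 \<le> length c \<and> is_path E c \<and> {last c, hd c} \<in> E)"

definition tree :: "'v set \<Rightarrow> 'v set set \<Rightarrow> bool" where
  "tree V E \<longleftrightarrow> graph V E \<and> V \<noteq> {} \<and> connected_graph V E \<and> \<not> has_cycle E"

definition degree :: "'v set set \<Rightarrow> 'v \<Rightarrow> nat" where
  "degree E v = card {e \<in> E. v \<in> e}"

definition leaves :: "'v set \<Rightarrow> 'v set set \<Rightarrow> 'v set" where
  "leaves V E = {v \<in> V. degree E v \<le> 1}"

definition phylo_tree :: "'v set \<Rightarrow> 'v set \<Rightarrow> 'v set set \<Rightarrow> bool" where
  "phylo_tree X V E \<longleftrightarrow> tree V E \<and> leaves V E = X \<and> (\<forall>v\<in>V. degree E v \<noteq> 2)"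

definition binary_phylo_tree :: "'v set \<Rightarrow> 'v set \<Rightarrow> 'v set set \<Rightarrow> bool" where
  "binary_phylo_tree X V E \<longleftrightarrow> phylo_tree X V E \<and> (\<forall>v\<in>V. degree E v \<le> 3)"

definition path_edges :: "'v list \<Rightarrow> 'v set set" where
  "path_edges p = {{p ! i, p ! Suc i} | i. Suc i < length p}"

definition leaf_to_leaf_path :: "'v set \<Rightarrow> 'v set set \<Rightarrow> 'v list \<Rightarrow> bool" where
  "leaf_to_leaf_path X E p \<longleftrightarrow> is_path E p \<and> hd p \<in> X \<and> last p \<in> X \<and> hd p \<noteq> last p"

definition edge_disjoint_l2l_family ::
  "'v set \<Rightarrow> 'v set set \<Rightarrow> nat \<Rightarrow> (nat \<Rightarrow> 'v list) \<Rightarrow> bool" where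
  "edge_disjoint_l2l_family X E k P \<longleftrightarrow>
     (\<forall>i<k. leaf_to_leaf_path X E (P i)) \<and>
     (\<forall>i<k. \<forall>j<k. i \<noteq> j \<longrightarrow> path_edges (P i) \<inter> path_edges (P j) = {})"

definition endpoint_pairs :: "nat \<Rightarrow> (nat \<Rightarrow> 'v list) \<Rightarrow> 'v set set" where
  "endpoint_pairs k P = {{hd (P i), last (P i)} | i. i < k}"

text \<open>Binary characters: states {a,b} rendered as bool.\<close>
definition changes :: "'v set set \<Rightarrow> ('v \<Rightarrow> bool) \<Rightarrow> nat" where
  "changes E g = card {e \<in> E. \<exists>u v. e = {u, v} \<and> g u \<noteq> g v}"

definition parsimony_score :: "'v set \<Rightarrow> 'v set set \<Rightarrow> ('v \<Rightarrow> bool) \<Rightarrow> nat" where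
  "parsimony_score X E f = (LEAST n. \<exists>g. (\<forall>x\<in>X. g x = f x) \<and> changes E g = n)"

definition A_k :: "nat \<Rightarrow> 'v set \<Rightarrow> 'v set set \<Rightarrow> ('v \<Rightarrow> bool) set" where
  "A_k k X E = {f \<in> X \<rightarrow>\<^sub>E (UNIV :: bool set). parsimony_score X E f = k}"

end

theory Submission
  imports Defs "HOL-Library.Disjoint_Sets"
begin

text \<open>
  A character f separating the two ends of every path P i needs a change on each of the k
  edge-disjoint paths, and colouring all non-leaves False achieves k changes. If instead the
  ends of some P i0 have equal colours, root the tree at an end of P i0 and colour every vertex
  like its nearest anchor (leaf or vertex of a monochromatic path) towards the root: every
  changing edge is then charged injectively to a path other than P i0, so the score is at most
  k - 1. Thus A_k(T) consists of the characters separating every endpoint pair, and this set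
  determines the perfect pairing of X from which it comes.
\<close>

fun walk :: "'v set set \<Rightarrow> 'v list \<Rightarrow> bool" where
  "walk E [] = False"
| "walk E [x] = True"
| "walk E (x # y # xs) \<longleftrightarrow> {x, y} \<in> E \<and> walk E (y # xs)"

lemma edge_indices_Cons_Cons:
  "{i. Suc i < length (x # y # xs)} = insert 0 (Suc ` {i. Suc i < length (y # xs)})"
  by (auto simp: image_iff elim: less_SucE) (metis Suc_less_SucD not0_implies_Suc)

lemma walk_iff_nth:
  "walk E p \<longleftrightarrow> p \<noteq> [] \<and> (\<forall>i. Suc i < length p \<longrightarrow> {p ! i, p ! Suc i} \<in> E)"
proof (induction p rule: induct_list012)
  case (3 x y xs)
  have "(\<forall>i. Suc i < length (x # y # xs) \<longrightarrow> {(x # y # xs) ! i, (x # y # xs) ! Suc i} \<in> E) \<longleftrightarrow>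
        (\<forall>i\<in>{i. Suc i < length (x # y # xs)}. {(x # y # xs) ! i, (x # y # xs) ! Suc i} \<in> E)"
    by blast
  with "3.IH" show ?case unfolding edge_indices_Cons_Cons by auto
qed auto

lemma is_path_iff_walk: "is_path E p \<longleftrightarrow> distinct p \<and> walk E p"
  unfolding is_path_def walk_iff_nth by auto

lemma path_edges_eq_image: "path_edges p = (\<lambda>i. {p ! i, p ! Suc i}) ` {i. Suc i < length p}"
  unfolding path_edges_def by blast

lemma path_edges_Nil [simp]: "path_edges [] = {}"
  and path_edges_singleton [simp]: "path_edges [x] = {}"
  by (simp_all add: path_edges_def)

lemma path_edges_Cons_Cons [simp]:
  "path_edges (x # y # xs) = insert {x, y} (path_edges (y # xs))"
  unfolding path_edges_eq_image edge_indices_Cons_Cons by (simp add: image_image)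

lemma path_edges_Cons: "path_edges (x # ys) = (if ys = [] then {} else insert {x, hd ys} (path_edges ys))"
  by (cases ys) auto

lemma walk_Cons: "walk E (x # ys) \<longleftrightarrow> ys = [] \<or> {x, hd ys} \<in> E \<and> walk E ys"
  by (cases ys) auto

lemma walk_append:
  "walk E (xs @ ys) \<longleftrightarrow>
     xs = [] \<and> walk E ys \<or> ys = [] \<and> walk E xs \<or>
     xs \<noteq> [] \<and> ys \<noteq> [] \<and> walk E xs \<and> walk E ys \<and> {last xs, hd ys} \<in> E"
  by (induction xs rule: induct_list012) (auto simp: walk_Cons)

lemma walk_appendD1: "walk E (xs @ ys) \<Longrightarrow> xs \<noteq> [] \<Longrightarrow> walk E xs"
  and walk_appendD2: "walk E (xs @ ys) \<Longrightarrow> ys \<noteq> [] \<Longrightarrow> walk E ys"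
  by (auto simp: walk_append)

lemma path_edges_append:
  "xs \<noteq> [] \<Longrightarrow> ys \<noteq> [] \<Longrightarrow>
     path_edges (xs @ ys) = insert {last xs, hd ys} (path_edges xs \<union> path_edges ys)"
  by (induction xs rule: induct_list012) (auto simp: path_edges_Cons)

lemma walk_rev [simp]: "walk E (rev p) \<longleftrightarrow> walk E p"
  by (induction p rule: induct_list012) (auto simp: walk_append insert_commute)


lemma path_edges_subset_set: "e \<in> path_edges p \<Longrightarrow> e \<subseteq> set p"
  by (induction p rule: induct_list012) auto

lemma walk_edges_subset: "walk E p \<Longrightarrow> path_edges p \<subseteq> E"
  by (induction p rule: induct_list012) auto

lemma walk_Diff: "walk (E - F) p \<longleftrightarrow> walk E p \<and> path_edges p \<inter> F = {}"
  by (induction p rule: induct_list012) auto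

lemma walk_mono: "walk E p \<Longrightarrow> E \<subseteq> E' \<Longrightarrow> walk E' p"
  by (induction p rule: induct_list012) auto

lemma walk_concat: "walk E xs \<Longrightarrow> walk E ys \<Longrightarrow> last xs = hd ys \<Longrightarrow> walk E (xs @ tl ys)"
  by (cases ys) (auto simp: walk_append walk_Cons)

lemma path_edges_concat:
  "last xs = hd ys \<Longrightarrow> path_edges (xs @ tl ys) \<subseteq> path_edges xs \<union> path_edges ys"
  by (cases "xs = []"; cases ys) (auto simp: path_edges_append path_edges_Cons)

lemma walk_has_change_edge:
  "walk E p \<Longrightarrow> h (hd p) \<noteq> h (last p) \<Longrightarrow> \<exists>e\<in>path_edges p. \<exists>u v. e = {u, v} \<and> h u \<noteq> h v"
proof (induction p rule: induct_list012)
  case (3 x y zs)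
  then show ?case by (cases "h x = h y") auto
qed auto

lemma walk_shortcut:
  assumes "walk E q"
  shows "\<exists>p. distinct p \<and> walk E p \<and> hd p = hd q \<and> last p = last q"
  using assms
proof (induction "length q" arbitrary: q rule: less_induct)
  case less
  show ?case
  proof (cases "distinct q")
    case False
    then obtain xs y ys zs where q: "q = xs @ [y] @ ys @ [y] @ zs"
      using not_distinct_decomp by blast
    have "walk E ([y] @ zs)"
      using walk_appendD2[of E "xs @ [y] @ ys" "[y] @ zs"] less.prems unfolding q by simp
    then have "walk E (xs @ [y] @ zs)"
      using less.prems unfolding q by (auto simp: walk_append)
    moreover have "hd (xs @ [y] @ zs) = hd q" "last (xs @ [y] @ zs) = last q"
      unfolding q by (cases xs; cases zs; simp)+
    moreover have "length (xs @ [y] @ zs) < length q"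
      unfolding q by simp
    ultimately show ?thesis using less.hyps by metis
  qed (use less.prems in blast)
qed

lemma path_segment_forward:
  assumes p: "is_path E p" and sp: "p = as @ x # bs" and y: "y \<in> set bs"
  shows "\<exists>s. is_path E s \<and> hd s = x \<and> last s = y \<and> set s \<subseteq> set p \<and> 2 \<le> length s"
proof -
  obtain cs ds where bs: "bs = cs @ y # ds" using y split_list by metis
  have "p = as @ (x # cs @ [y]) @ ds" using sp bs by simp
  then have "walk E (as @ (x # cs @ [y]) @ ds)" "distinct (x # cs @ [y])"
    using p by (auto simp: is_path_iff_walk)
  then have "walk E (x # cs @ [y])" "distinct (x # cs @ [y])"
    using walk_appendD1 walk_appendD2 by blast+
  then show ?thesis using sp bs by (intro exI[of _ "x # cs @ [y]"]) (auto simp: is_path_iff_walk)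
qed

lemma path_segment:
  assumes p: "is_path E p" and "x \<in> set p" "y \<in> set p" "x \<noteq> y"
  shows "\<exists>s. is_path E s \<and> hd s = x \<and> last s = y \<and> set s \<subseteq> set p \<and> 2 \<le> length s"
proof -
  obtain as bs where sp: "p = as @ x # bs" using assms(2) split_list by metis
  then consider "y \<in> set bs" | "y \<in> set as" using assms by auto
  then show ?thesis
  proof cases
    case 1
    then show ?thesis using path_segment_forward[OF p sp] by blast
  next
    case 2
    have "is_path E (rev p)" using p by (simp add: is_path_iff_walk)
    moreover have "rev p = rev bs @ x # rev as" using sp by simp
    ultimately show ?thesis using path_segment_forward[of E "rev p" "rev bs" x "rev as" y] 2 sp by auto
  qed
qed

lemma path_interior_edges:
  assumes "is_path E p" "v \<in> set p" "v \<noteq> hd p" "v \<noteq> last p"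
  shows "\<exists>a b. {a, v} \<in> path_edges p \<and> {v, b} \<in> path_edges p \<and> a \<noteq> b \<and> a \<noteq> v \<and> b \<noteq> v"
proof -
  obtain xs ys where sp: "p = xs @ v # ys" using assms(2) split_list by metis
  have ne: "xs \<noteq> []" "ys \<noteq> []" using sp assms(3,4) by auto
  have "{last xs, v} \<in> path_edges p" "{v, hd ys} \<in> path_edges p"
    using sp ne path_edges_append[of xs "v # ys"] by (simp_all add: path_edges_Cons)
  moreover have "last xs \<noteq> hd ys" "last xs \<noteq> v" "hd ys \<noteq> v"
    using assms(1) sp ne by (auto simp: is_path_def dest: last_in_set hd_in_set)
  ultimately show ?thesis by blast
qed

lemma path_end_edge:
  assumes "is_path E p" "hd p \<noteq> last p" "v = hd p \<or> v = last p"
  shows "\<exists>e\<in>path_edges p. v \<in> e"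
proof -
  obtain a r where p: "p = a # r" using assms(1) by (cases p) (auto simp: is_path_def)
  then have "r \<noteq> []" using assms(2) by auto
  then obtain r' b where "r = r' @ [b]" by (metis append_butlast_last_id)
  then have "{a, hd r} \<in> path_edges p" "{last (a # r'), b} \<in> path_edges p"
    using p path_edges_append[of "a # r'" "[b]"] \<open>r \<noteq> []\<close> by (simp_all add: path_edges_Cons)
  then show ?thesis using assms(3) p \<open>r = r' @ [b]\<close> by auto
qed

locale finite_tree =
  fixes V :: "'v set" and E :: "'v set set"
  assumes tree: "tree V E"
begin

lemma edge_cases: "e \<in> E \<Longrightarrow> \<exists>u v. e = {u, v} \<and> u \<noteq> v \<and> u \<in> V \<and> v \<in> V"
  using tree by (auto simp: tree_def graph_def)

lemma finite_vertices: "finite V"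
  using tree by (simp add: tree_def graph_def)

lemma finite_edges: "finite E"
proof -
  have "E \<subseteq> Pow V" using edge_cases by blast
  then show ?thesis using finite_vertices by (meson finite_Pow_iff finite_subset)
qed

lemma edge_in_vertices: "{u, v} \<in> E \<Longrightarrow> u \<in> V \<and> v \<in> V"
  using edge_cases by (metis doubleton_eq_iff)

lemma edge_neq: "{u, v} \<in> E \<Longrightarrow> u \<noteq> v"
  using edge_cases by (metis doubleton_eq_iff insert_absorb2)

lemma connected: "u \<in> V \<Longrightarrow> v \<in> V \<Longrightarrow> \<exists>p. is_path E p \<and> hd p = u \<and> last p = v"
  using tree by (simp add: tree_def connected_graph_def)

lemma walk_in_vertices: "walk E p \<Longrightarrow> hd p \<in> V \<Longrightarrow> set p \<subseteq> V"
  by (induction p rule: induct_list012) (auto dest: edge_in_vertices)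

lemma edge_is_bridge:
  assumes e: "{u, w} \<in> E"
  shows "\<not> (\<exists>q. walk (E - {{u, w}}) q \<and> hd q = u \<and> last q = w)"
proof
  assume "\<exists>q. walk (E - {{u, w}}) q \<and> hd q = u \<and> last q = w"
  then obtain p where p: "distinct p" "walk (E - {{u, w}}) p" "hd p = u" "last p = w"
    using walk_shortcut by metis
  have "u \<noteq> w" using edge_neq e by blast
  then obtain a b r where abr: "p = a # b # r"
    using p by (cases p rule: remdups_adj.cases) auto
  show False
  proof (cases r)
    case Nil
    then show False using p abr by (simp add: walk_Diff)
  next
    case Cons
    have "is_path E p" using p walk_mono[of "E - {{u, w}}" p E] by (auto simp: is_path_iff_walk)
    moreover have "3 \<le> length p" "{last p, hd p} \<in> E"
      using abr Cons p e by (auto simp: insert_commute)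
    ultimately show False using tree by (auto simp: tree_def has_cycle_def)
  qed
qed

lemma paths_from_same_vertex_same_second_vertex:
  assumes p: "is_path E (a # p')" and q: "is_path E (a # q')"
    and ne: "p' \<noteq> []" "q' \<noteq> []" and last: "last p' = last q'"
  shows "hd p' = hd q'"
proof (rule ccontr)
  assume hd_ne: "hd p' \<noteq> hd q'"
  define e where "e = {a, hd p'}"
  have "e \<in> E"
    using p ne by (auto simp: is_path_iff_walk walk_Cons e_def)
  have a: "a \<notin> set p'" "a \<notin> set q'"
    using p q by (auto simp: is_path_def)
  \<comment> \<open>going along a # q' and back along p' leads from a to hd p' avoiding e\<close>
  define w where "w = (a # q') @ tl (rev p')"
  have "walk E w"
    unfolding w_def using p q ne last walk_concat[of E "a # q'" "rev p'"]
    by (auto simp: is_path_iff_walk last_rev hd_rev walk_Cons)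
  moreover have "e \<notin> path_edges (a # q')"
    using a hd_ne ne path_edges_subset_set unfolding e_def
    by (fastforce simp: path_edges_Cons doubleton_eq_iff)
  moreover have "e \<notin> path_edges (rev p')"
    using a path_edges_subset_set unfolding e_def by fastforce
  ultimately have "walk (E - {e}) w"
    using path_edges_concat[of "a # q'" "rev p'"] ne last
    unfolding w_def by (auto simp: walk_Diff last_rev hd_rev)
  moreover have "last w = hd p'"
  proof (cases "tl (rev p') = []")
    case True
    then obtain x where "p' = [x]" using ne by (cases p' rule: rev_cases) auto
    then show ?thesis using ne last True unfolding w_def by simp
  next
    case False
    then show ?thesis unfolding w_def by (simp add: last_tl last_rev)
  qed
  moreover have "hd w = a" unfolding w_def by simp
  ultimately show False using edge_is_bridge \<open>e \<in> E\<close> unfolding e_def by blast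
qed

lemma path_unique:
  "is_path E p \<Longrightarrow> is_path E q \<Longrightarrow> hd p = hd q \<Longrightarrow> last p = last q \<Longrightarrow> p = q"
proof (induction p arbitrary: q)
  case Nil
  then show ?case by (simp add: is_path_def)
next
  case (Cons a p')
  obtain q' where q: "q = a # q'"
    using Cons.prems by (cases q) (auto simp: is_path_def)
  have "p' = [] \<longleftrightarrow> q' = []"
    using Cons.prems q by (metis distinct.simps(2) is_path_def last.simps last_in_set)
  moreover have "p' = q'" if ne: "p' \<noteq> []" "q' \<noteq> []"
  proof -
    have "is_path E p'" "is_path E q'"
      using Cons.prems q ne by (auto simp: is_path_iff_walk walk_Cons)
    moreover have "last p' = last q'"
      using Cons.prems q ne by simp
    moreover have "hd p' = hd q'"
      using paths_from_same_vertex_same_second_vertex Cons.prems(1,2) ne calculation(3)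
      unfolding q by blast
    ultimately show ?thesis using Cons.IH by blast
  qed
  ultimately show ?case using q by blast
qed

end

locale rooted_tree = finite_tree +
  fixes root :: 'v
  assumes root_in_vertices: "root \<in> V"
begin

definition root_path :: "'v \<Rightarrow> 'v list" where
  "root_path v = (THE p. is_path E p \<and> hd p = root \<and> last p = v)"

definition parent :: "'v \<Rightarrow> 'v" where
  "parent v = last (butlast (root_path v))"

lemma root_path:
  assumes "v \<in> V"
  shows "is_path E (root_path v) \<and> hd (root_path v) = root \<and> last (root_path v) = v"
proof -
  obtain p where "is_path E p \<and> hd p = root \<and> last p = v"
    using connected[OF root_in_vertices assms] by blast
  then have "\<exists>!p. is_path E p \<and> hd p = root \<and> last p = v"
    using path_unique by (intro ex1I[of _ p]) auto
  then show ?thesis unfolding root_path_def by (rule theI')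
qed

lemma root_path_eq: "is_path E p \<Longrightarrow> hd p = root \<Longrightarrow> last p = v \<Longrightarrow> root_path v = p"
proof -
  assume p: "is_path E p" "hd p = root" "last p = v"
  then have "walk E p" "p \<noteq> []" by (auto simp: is_path_iff_walk)
  then have "v \<in> V"
    using walk_in_vertices[of p] root_in_vertices p last_in_set[of p] by auto
  then show ?thesis using path_unique[of "root_path v" p] root_path[of v] p by simp
qed

lemma root_path_root: "root_path root = [root]"
  by (rule root_path_eq) (auto simp: is_path_iff_walk)

lemma root_path_prefix:
  assumes "v \<in> V" "root_path v = xs @ x # ys"
  shows "root_path x = xs @ [x]"
proof (rule root_path_eq)
  have "is_path E (xs @ [x] @ ys)" "hd (xs @ [x] @ ys) = root"
    using root_path[OF assms(1)] assms(2) by simp_all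
  then show "is_path E (xs @ [x])" "hd (xs @ [x]) = root"
    using walk_appendD1[of E "xs @ [x]" ys] by (auto simp: is_path_iff_walk hd_append split: if_splits)
qed simp

lemma root_path_parent:
  assumes "v \<in> V" "v \<noteq> root"
  shows "root_path v = root_path (parent v) @ [v]"
proof -
  obtain b where b: "root_path v = b @ [v]"
    using root_path[OF assms(1)] by (metis append_butlast_last_id is_path_def)
  then have "b \<noteq> []" using root_path[OF assms(1)] assms(2) by auto
  then have "root_path (last b) = b"
    using root_path_prefix[OF assms(1), of "butlast b" "last b" "[v]"] b by simp
  moreover have "parent v = last b" unfolding parent_def b by simp
  ultimately show ?thesis using b by simp
qed

lemma parent_edge:
  assumes "v \<in> V" "v \<noteq> root"
  shows "{parent v, v} \<in> E"
proof -
  have "root_path (parent v) \<noteq> []" "walk E (root_path (parent v) @ [v])"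
    using root_path[OF assms(1)] root_path_parent[OF assms] assms(2) by (auto simp: is_path_iff_walk)
  moreover have "last (root_path (parent v)) = parent v"
    using root_path_parent[OF assms] by (metis butlast_snoc parent_def)
  ultimately show ?thesis by (auto simp: walk_append)
qed

lemma parent_in_vertices: "v \<in> V \<Longrightarrow> v \<noteq> root \<Longrightarrow> parent v \<in> V"
  using parent_edge edge_in_vertices by blast

lemma length_root_path_parent:
  "v \<in> V \<Longrightarrow> v \<noteq> root \<Longrightarrow> length (root_path (parent v)) < length (root_path v)"
  using root_path_parent by simp

lemma root_path_snoc:
  assumes e: "{u, w} \<in> E" and w: "w \<notin> set (root_path u)"
  shows "root_path w = root_path u @ [w]"
proof (rule root_path_eq)
  have u: "u \<in> V" using edge_in_vertices[OF e] by blast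
  have "root_path u \<noteq> []" using root_path[OF u] by (simp add: is_path_def)
  then show "is_path E (root_path u @ [w])" "hd (root_path u @ [w]) = root"
    using root_path[OF u] e w by (auto simp: is_path_iff_walk walk_append)
qed simp

lemma root_in_root_path: "v \<in> V \<Longrightarrow> root \<in> set (root_path v)"
  using root_path by (metis hd_in_set is_path_def)

lemma edge_parent_cases:
  assumes e: "{u, w} \<in> E"
  shows "w \<noteq> root \<and> parent w = u \<or> u \<noteq> root \<and> parent u = w"
proof -
  have V: "u \<in> V" "w \<in> V" using edge_in_vertices[OF e] by blast+
  have child: "y \<noteq> root \<and> parent y = x" if "{x, y} \<in> E" "x \<in> V" "y \<notin> set (root_path x)" for x y
    using root_path_snoc[OF that(1,3)] root_in_root_path[OF that(2)] root_path[OF that(2)] that(3)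
    unfolding parent_def by auto
  show ?thesis
  proof (cases "w \<in> set (root_path u)")
    case True
    then obtain xs ys where sp: "root_path u = xs @ w # ys" using split_list by metis
    have "root_path w = xs @ [w]" using root_path_prefix[OF V(1) sp] .
    moreover have "u \<notin> set (xs @ [w])"
    proof -
      have "ys \<noteq> []" using sp root_path[OF V(1)] edge_neq[OF e] by auto
      moreover have "last (root_path u) = u" using root_path[OF V(1)] by blast
      ultimately have "last ys = u" unfolding sp by simp
      then have "u \<in> set ys" using last_in_set[OF \<open>ys \<noteq> []\<close>] by simp
      then show ?thesis using root_path[OF V(1)] sp by (auto simp: is_path_def)
    qed
    ultimately show ?thesis using child[of w u] e V by (simp add: insert_commute)
  qed (use child e V in blast)
qed

lemma length_root_path_less:
  assumes t: "t \<in> V" and x: "x \<in> set (root_path t)" "x \<noteq> t"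
  shows "length (root_path x) < length (root_path t)"
proof -
  obtain xs ys where sp: "root_path t = xs @ x # ys" using x(1) split_list by metis
  then have "ys \<noteq> []" using root_path[OF t] x(2) by auto
  then show ?thesis using root_path_prefix[OF t sp] sp by simp
qed

lemma path_has_top:
  assumes p: "is_path E p" "set p \<subseteq> V"
  shows "\<exists>t\<in>set p. \<forall>v\<in>set p. v \<noteq> t \<longrightarrow> v \<noteq> root \<and> parent v \<in> set p"
proof -
  have "hd p \<in> set p" using p(1) by (simp add: is_path_def)
  then obtain t where t: "t \<in> set p"
    and t_min: "\<And>y. y \<in> set p \<Longrightarrow> length (root_path t) \<le> length (root_path y)"
    using ex_has_least_nat[of "\<lambda>x. x \<in> set p" "hd p" "\<lambda>x. length (root_path x)"] by blast
  have tV: "t \<in> V" using t p(2) by blast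
  have rt: "is_path E (root_path t)" "hd (root_path t) = root" "last (root_path t) = t"
    using root_path[OF tV] by blast+
  have "v \<noteq> root \<and> parent v \<in> set p" if v: "v \<in> set p" "v \<noteq> t" for v
  proof -
    obtain s where s: "is_path E s" "hd s = t" "last s = v" "set s \<subseteq> set p" "2 \<le> length s"
      using path_segment[OF p(1) t v(1) v(2)[symmetric]] by blast
    then obtain s' where s': "s = t # s'" "s' \<noteq> []"
      by (cases s) (auto simp: Suc_le_length_iff)
    have t_s': "t \<notin> set s'" and s'_p: "set s' \<subseteq> set p"
      using s s' by (auto simp: is_path_def)
    \<comment> \<open>a vertex of the root path of t lying on s' would be on p and closer to the root than t\<close>
    have "set (root_path t) \<inter> set s' = {}"
    proof (rule ccontr)
      assume "set (root_path t) \<inter> set s' \<noteq> {}"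
      then obtain x where x: "x \<in> set (root_path t)" "x \<in> set s'" by blast
      then have "length (root_path x) < length (root_path t)"
        using length_root_path_less[OF tV x(1)] t_s' by blast
      then show False using t_min x(2) s'_p by fastforce
    qed
    then have "is_path E (root_path t @ s')"
      using walk_concat[of E "root_path t" s] rt s s' by (auto simp: is_path_iff_walk)
    then have rv: "root_path v = root_path t @ s'"
      using rt s s' by (intro root_path_eq) (auto simp: is_path_def)
    have "v \<noteq> root"
      using rv root_path_root rt(1) s'(2) by (cases "root_path t") (auto simp: is_path_def)
    moreover have "parent v \<in> set p"
    proof (cases "butlast s' = []")
      case True
      then show ?thesis using rv t s'(2) unfolding parent_def by (simp add: butlast_append rt(3))
    next
      case False
      then have "parent v \<in> set s'"
        using rv s'(2) unfolding parent_def by (simp add: butlast_append in_set_butlastD)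
      then show ?thesis using s'_p by blast
    qed
    ultimately show ?thesis by blast
  qed
  then show ?thesis using t by blast
qed

lemma changes_le_card_changing_children:
  "changes E g \<le> card {w \<in> V. w \<noteq> root \<and> g w \<noteq> g (parent w)}"
proof -
  let ?C = "{w \<in> V. w \<noteq> root \<and> g w \<noteq> g (parent w)}"
  have "{e \<in> E. \<exists>u v. e = {u, v} \<and> g u \<noteq> g v} \<subseteq> (\<lambda>w. {parent w, w}) ` ?C"
  proof clarify
    fix u v assume e: "{u, v} \<in> E" "g u \<noteq> g v"
    then consider "v \<noteq> root" "parent v = u" | "u \<noteq> root" "parent u = v"
      using edge_parent_cases by blast
    then show "{u, v} \<in> (\<lambda>w. {parent w, w}) ` ?C"
      using e edge_in_vertices[OF e(1)] by cases (auto simp: insert_commute)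
  qed
  then have "changes E g \<le> card ((\<lambda>w. {parent w, w}) ` ?C)"
    unfolding changes_def using finite_vertices by (intro card_mono) auto
  also have "\<dots> \<le> card ?C"
    by (rule card_image_le) (simp add: finite_vertices)
  finally show ?thesis .
qed

end

locale leaf_path_family =
  fixes X V :: "'v set" and E :: "'v set set" and k :: nat and P :: "nat \<Rightarrow> 'v list"
  assumes binary: "binary_phylo_tree X V E"
    and family: "edge_disjoint_l2l_family X E k P"
    and card_leaves: "card X = 2 * k"
begin

sublocale finite_tree V E
  using binary by unfold_locales (simp add: binary_phylo_tree_def phylo_tree_def)

lemma leaves_eq: "X = {v \<in> V. degree E v \<le> 1}"
  using binary by (simp add: binary_phylo_tree_def phylo_tree_def leaves_def)

lemma leaves_subset: "X \<subseteq> V"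
  using leaves_eq by blast

lemma leaf_edge_unique: "x \<in> X \<Longrightarrow> e1 \<in> E \<Longrightarrow> e2 \<in> E \<Longrightarrow> x \<in> e1 \<Longrightarrow> x \<in> e2 \<Longrightarrow> e1 = e2"
  using leaves_eq finite_edges by (auto simp: degree_def card_le_Suc0_iff_eq)

lemma not_leaf_if_two_edges: "{a, v} \<in> E \<Longrightarrow> {v, b} \<in> E \<Longrightarrow> a \<noteq> b \<Longrightarrow> v \<notin> X"
  using leaf_edge_unique edge_neq by (metis doubleton_eq_iff insertCI)

lemma family_path:
  "i < k \<Longrightarrow> is_path E (P i) \<and> hd (P i) \<in> X \<and> last (P i) \<in> X \<and> hd (P i) \<noteq> last (P i)"
  using family by (simp add: edge_disjoint_l2l_family_def leaf_to_leaf_path_def)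

lemma family_edges_disjoint:
  "i < k \<Longrightarrow> j < k \<Longrightarrow> i \<noteq> j \<Longrightarrow> path_edges (P i) \<inter> path_edges (P j) = {}"
  using family by (simp add: edge_disjoint_l2l_family_def)

lemma family_edges_subset: "i < k \<Longrightarrow> path_edges (P i) \<subseteq> E"
  using family_path walk_edges_subset by (auto simp: is_path_iff_walk)

lemma family_vertices_subset: "i < k \<Longrightarrow> set (P i) \<subseteq> V"
  using family_path walk_in_vertices leaves_subset by (auto simp: is_path_iff_walk)

lemma family_ends_in_set: "i < k \<Longrightarrow> hd (P i) \<in> set (P i) \<and> last (P i) \<in> set (P i)"
  using family_path by (auto simp: is_path_def)

lemma leaf_on_family_path:
  assumes "i < k" "v \<in> set (P i)" "v \<in> X"
  shows "v = hd (P i) \<or> v = last (P i)"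
  using path_interior_edges[of E "P i" v] family_path family_edges_subset not_leaf_if_two_edges assms
  by blast

lemma family_vertices_disjoint:
  assumes ij: "i < k" "j < k" and v: "v \<in> set (P i)" "v \<in> set (P j)"
  shows "i = j"
proof (rule ccontr)
  assume "i \<noteq> j"
  then have disj: "path_edges (P i) \<inter> path_edges (P j) = {}"
    using family_edges_disjoint ij by blast
  show False
  proof (cases "v \<in> X")
    case True
    obtain e1 e2 where "e1 \<in> path_edges (P i)" "v \<in> e1" "e2 \<in> path_edges (P j)" "v \<in> e2"
      using path_end_edge leaf_on_family_path family_path ij v True by metis
    then show False using leaf_edge_unique[OF True] family_edges_subset ij disj by blast
  next
    case False
    \<comment> \<open>v is interior to both paths, so the four path edges at v exceed its degree bound 3\<close>
    obtain a b where ab: "{a, v} \<in> path_edges (P i)" "{v, b} \<in> path_edges (P i)" "a \<noteq> b" "a \<noteq> v"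
      using path_interior_edges[of E "P i" v] family_path[OF ij(1)] v(1) False by metis
    obtain c d where cd: "{c, v} \<in> path_edges (P j)" "{v, d} \<in> path_edges (P j)" "c \<noteq> d" "c \<noteq> v"
      using path_interior_edges[of E "P j" v] family_path[OF ij(2)] v(2) False by metis
    let ?S = "{{a, v}, {v, b}, {c, v}, {v, d}}"
    have "{a, v} \<noteq> {v, b}" "{c, v} \<noteq> {v, d}"
      using ab cd by (auto simp: doubleton_eq_iff)
    moreover have "{{c, v}, {v, d}} \<subseteq> path_edges (P j)"
      using cd by simp
    then have "{a, v} \<notin> {{c, v}, {v, d}}" "{v, b} \<notin> {{c, v}, {v, d}}"
      using ab(1,2) disj by (meson disjoint_iff subsetD)+
    ultimately have "card ?S = 4"
      by (simp add: card_insert_if)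
    moreover have "?S \<subseteq> {e \<in> E. v \<in> e}"
      using ab cd family_edges_subset ij by blast
    then have "card ?S \<le> degree E v"
      unfolding degree_def using finite_edges by (intro card_mono) auto
    moreover have "degree E v \<le> 3"
      using binary family_vertices_subset ij(1) v(1) by (auto simp: binary_phylo_tree_def)
    ultimately show False by simp
  qed
qed

lemma leaf_is_family_end: "x \<in> X \<Longrightarrow> \<exists>i<k. x = hd (P i) \<or> x = last (P i)"
proof -
  assume x: "x \<in> X"
  define ends where "ends = (\<lambda>(i, first). if first then hd (P i) else last (P i))"
  have "inj_on ends ({..<k} \<times> UNIV)"
  proof (rule inj_onI, clarsimp)
    fix i first j first'
    assume ij: "i < k" "j < k" and eq: "ends (i, first) = ends (j, first')"
    have "ends (i, first) \<in> set (P i)" "ends (j, first') \<in> set (P j)"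
      using family_ends_in_set ij unfolding ends_def by auto
    then have "i = j"
      using family_vertices_disjoint[OF ij] eq by simp
    then show "i = j \<and> first = first'"
      using eq family_path[OF ij(1)] unfolding ends_def by (cases first; cases first') auto
  qed
  then have "card (ends ` ({..<k} \<times> UNIV)) = card X"
    using card_leaves by (simp add: card_image card_cartesian_product)
  moreover have "ends ` ({..<k} \<times> UNIV) \<subseteq> X"
    unfolding ends_def using family_path by auto
  ultimately have "ends ` ({..<k} \<times> UNIV) = X"
    using finite_subset[OF leaves_subset finite_vertices] by (simp add: card_subset_eq)
  then obtain i first where "i < k" "x = ends (i, first)" using x by auto
  then show ?thesis unfolding ends_def by (cases first) auto
qed

lemma endpoint_pairs_partition:
  "partition_on X (endpoint_pairs k P) \<and> (\<forall>e\<in>endpoint_pairs k P. card e = 2)"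
proof (intro conjI partition_onI ballI)
  show "\<Union>(endpoint_pairs k P) = X"
  proof
    show "\<Union>(endpoint_pairs k P) \<subseteq> X"
      using family_path unfolding endpoint_pairs_def by auto
    show "X \<subseteq> \<Union>(endpoint_pairs k P)"
    proof
      fix x assume "x \<in> X"
      then obtain i where "i < k" "x \<in> {hd (P i), last (P i)}"
        using leaf_is_family_end by blast
      then show "x \<in> \<Union>(endpoint_pairs k P)" unfolding endpoint_pairs_def by blast
    qed
  qed
  show "disjnt e e'"
    if e: "e \<in> endpoint_pairs k P" and e': "e' \<in> endpoint_pairs k P" and ne: "e \<noteq> e'" for e e'
  proof -
    obtain i j where ij: "i < k" "j < k" "e = {hd (P i), last (P i)}" "e' = {hd (P j), last (P j)}"
      using e e' unfolding endpoint_pairs_def by blast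
    then have "e \<subseteq> set (P i)" "e' \<subseteq> set (P j)" "i \<noteq> j"
      using family_ends_in_set ne by auto
    then show ?thesis
      using family_vertices_disjoint[OF ij(1,2)] unfolding disjnt_def by blast
  qed
  show "{} \<notin> endpoint_pairs k P"
    unfolding endpoint_pairs_def by blast
  show "card e = 2" if "e \<in> endpoint_pairs k P" for e
    using family_path that unfolding endpoint_pairs_def by auto
qed

lemma changes_ge_if_bichromatic:
  assumes bi: "\<forall>i<k. g (hd (P i)) \<noteq> g (last (P i))"
  shows "k \<le> changes E g"
proof -
  define S where "S = {e \<in> E. \<exists>u v. e = {u, v} \<and> g u \<noteq> g v}"
  have "\<exists>e. e \<in> path_edges (P i) \<and> e \<in> S" if i: "i < k" for i
  proof -
    have w: "walk E (P i)" "g (hd (P i)) \<noteq> g (last (P i))"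
      using family_path[OF i] bi i by (auto simp: is_path_iff_walk)
    obtain e where "e \<in> path_edges (P i)" "\<exists>u v. e = {u, v} \<and> g u \<noteq> g v"
      using walk_has_change_edge[OF w] by blast
    then show ?thesis using family_edges_subset[OF i] unfolding S_def by blast
  qed
  then obtain change where change: "\<And>i. i < k \<Longrightarrow> change i \<in> path_edges (P i) \<and> change i \<in> S"
    by metis
  have "inj_on change {..<k}"
    using change family_edges_disjoint by (intro inj_onI) (metis disjoint_iff lessThan_iff)
  moreover have "change ` {..<k} \<subseteq> S" using change by blast
  moreover have "finite S" unfolding S_def using finite_edges by simp
  ultimately have "card {..<k} \<le> card S" using card_inj_on_le by blast
  then show ?thesis unfolding changes_def S_def by simp
qed

lemma changes_le_if_bichromatic:
  assumes bi: "\<forall>i<k. f (hd (P i)) \<noteq> f (last (P i))"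
  shows "changes E (\<lambda>v. v \<in> X \<and> f v) \<le> k"
proof -
  define T where "T = {x \<in> X. f x}"
  define S where "S = {e \<in> E. \<exists>u v. e = {u, v} \<and> (u \<in> X \<and> f u) \<noteq> (v \<in> X \<and> f v)}"
  \<comment> \<open>every changing edge is the unique edge at a leaf in T\<close>
  have "S \<subseteq> (\<lambda>x. THE e. e \<in> E \<and> x \<in> e) ` T"
  proof
    fix e assume "e \<in> S"
    then obtain u v where "e = {u, v}" "(u \<in> X \<and> f u) \<noteq> (v \<in> X \<and> f v)" "e \<in> E"
      unfolding S_def by blast
    then obtain x where x: "x \<in> T" "x \<in> e" "e \<in> E" unfolding T_def by auto
    moreover have "x \<in> X" using x(1) unfolding T_def by simp
    ultimately have "(THE e. e \<in> E \<and> x \<in> e) = e"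
      using leaf_edge_unique by (intro the_equality) auto
    then show "e \<in> (\<lambda>x. THE e. e \<in> E \<and> x \<in> e) ` T" using x(1) by blast
  qed
  moreover have "finite T"
    using finite_subset[OF leaves_subset finite_vertices] unfolding T_def by simp
  ultimately have card_S: "card S \<le> card T"
    using surj_card_le by blast
  \<comment> \<open>every leaf is an end of a family path, and each path has exactly one end in T\<close>
  obtain index where index: "\<And>x. x \<in> X \<Longrightarrow> index x < k \<and> x \<in> {hd (P (index x)), last (P (index x))}"
    using leaf_is_family_end by (metis insertCI)
  have "inj_on index T"
    using index bi unfolding T_def by (intro inj_onI) (metis empty_iff insertE mem_Collect_eq)
  then have "card T \<le> k"
    using card_inj_on_le[of index T "{..<k}"] index unfolding T_def by auto
  with card_S show ?thesis unfolding changes_def S_def by simp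
qed

lemma parsimony_score_eq_if_bichromatic:
  assumes bi: "\<forall>i<k. f (hd (P i)) \<noteq> f (last (P i))"
  shows "parsimony_score X E f = k"
  unfolding parsimony_score_def
proof (rule Least_equality)
  have "k \<le> changes E (\<lambda>v. v \<in> X \<and> f v)"
    using changes_ge_if_bichromatic bi family_path by simp
  then show "\<exists>g. (\<forall>x\<in>X. g x = f x) \<and> changes E g = k"
    using changes_le_if_bichromatic[OF bi] by (intro exI[of _ "\<lambda>v. v \<in> X \<and> f v"]) auto
next
  fix n assume "\<exists>g. (\<forall>x\<in>X. g x = f x) \<and> changes E g = n"
  then show "k \<le> n" using changes_ge_if_bichromatic bi family_path by force
qed

end

locale monochromatic_pair = leaf_path_family +
  fixes f :: "'v \<Rightarrow> bool" and i0 :: nat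
  assumes i0: "i0 < k" and mono_i0: "f (hd (P i0)) = f (last (P i0))"
begin

abbreviation root :: 'v where "root \<equiv> hd (P i0)"

lemma root_leaf: "root \<in> X"
  using family_path[OF i0] by blast

sublocale rooted_tree V E root
  using root_leaf leaves_subset by unfold_locales blast

definition monochromatic :: "nat \<Rightarrow> bool" where
  "monochromatic i \<longleftrightarrow> f (hd (P i)) = f (last (P i))"

definition path_index :: "'v \<Rightarrow> nat" where
  "path_index v = (SOME i. i < k \<and> v \<in> set (P i))"

definition anchor :: "'v \<Rightarrow> bool" where
  "anchor v \<longleftrightarrow> v \<in> X \<or> (\<exists>i<k. v \<in> set (P i) \<and> monochromatic i)"

definition anchor_colour :: "'v \<Rightarrow> bool" where
  "anchor_colour v = (if v \<in> X then f v else f (hd (P (path_index v))))"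

definition extension :: "'v \<Rightarrow> bool" where
  "extension v = anchor_colour (last (filter anchor (root_path v)))"

lemma path_index_eq: "i < k \<Longrightarrow> v \<in> set (P i) \<Longrightarrow> path_index v = i"
  unfolding path_index_def
  by (rule some_equality) (auto dest: family_vertices_disjoint)

lemma anchor_colour_monochromatic:
  assumes "i < k" "v \<in> set (P i)" "monochromatic i"
  shows "anchor_colour v = f (hd (P i))"
  using assms leaf_on_family_path[OF assms(1,2)] path_index_eq[OF assms(1,2)]
  unfolding anchor_colour_def monochromatic_def by auto

lemma extension_anchor:
  assumes "v \<in> V" "anchor v"
  shows "extension v = anchor_colour v"
proof -
  have "root_path v = butlast (root_path v) @ [v]"
    using root_path[OF assms(1)] by (metis append_butlast_last_id is_path_def)
  then show ?thesis
    using assms(2) unfolding extension_def by (metis filter.simps filter_append last_snoc)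
qed

lemma extension_non_anchor:
  assumes "v \<in> V" "v \<noteq> root" "\<not> anchor v"
  shows "extension v = extension (parent v)"
proof -
  have "root \<in> set (root_path (parent v))" "anchor root"
    using root_in_root_path parent_in_vertices assms root_leaf by (auto simp: anchor_def)
  then have "filter anchor (root_path (parent v)) \<noteq> []"
    by (auto simp: filter_empty_conv)
  then show ?thesis
    using root_path_parent[OF assms(1,2)] assms(3) unfolding extension_def by simp
qed

lemma extension_leaf: "x \<in> X \<Longrightarrow> extension x = f x"
  using extension_anchor leaves_subset by (auto simp: anchor_def anchor_colour_def)

lemma parent_of_leaf_on_family_path:
  assumes "w \<in> X" "i < k" "w \<in> set (P i)" "w \<noteq> root"
  shows "parent w \<in> set (P i)"
proof -
  have e: "{parent w, w} \<in> E" using parent_edge assms leaves_subset by blast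
  obtain e' where "e' \<in> path_edges (P i)" "w \<in> e'"
    using path_end_edge leaf_on_family_path family_path assms(1-3) by metis
  moreover have "e' = {parent w, w}"
    using leaf_edge_unique[OF assms(1) _ e] calculation family_edges_subset[OF assms(2)] by blast
  ultimately show ?thesis using path_edges_subset_set by blast
qed

lemma parent_leaf_eq_root:
  assumes "v \<in> V" "v \<noteq> root" "parent v \<in> X"
  shows "parent v = root"
proof (rule ccontr)
  assume ne: "parent v \<noteq> root"
  have pV: "parent v \<in> V" using parent_in_vertices assms by blast
  have "parent (parent v) \<in> set (root_path (parent (parent v)))"
    using root_path[OF parent_in_vertices[OF pV ne]] by (metis is_path_def last_in_set)
  then have "parent (parent v) \<in> set (root_path (parent v))"
    using root_path_parent[OF pV ne] by simp
  moreover have "v \<notin> set (root_path (parent v))"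
    using root_path[OF assms(1)] root_path_parent[OF assms(1,2)] by (auto simp: is_path_def)
  ultimately have "parent (parent v) \<noteq> v" by metis
  then show False
    using not_leaf_if_two_edges parent_edge[OF pV ne] parent_edge[OF assms(1,2)] assms(3) by blast
qed

lemma parent_on_root_family_path:
  assumes "v \<in> set (P i0)" "v \<noteq> root"
  shows "parent v \<in> set (P i0)"
proof -
  obtain t where t: "t \<in> set (P i0)" "\<forall>v\<in>set (P i0). v \<noteq> t \<longrightarrow> v \<noteq> root \<and> parent v \<in> set (P i0)"
    using path_has_top family_path[OF i0] family_vertices_subset[OF i0] by blast
  then have "t = root" using family_ends_in_set[OF i0] by metis
  then show ?thesis using t(2) assms by blast
qed

lemma anchor_on_family_path: "anchor w \<Longrightarrow> \<exists>i<k. w \<in> set (P i)"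
  using leaf_is_family_end family_ends_in_set unfolding anchor_def by metis

lemma changing_child_cases:
  assumes w: "w \<in> V" "w \<noteq> root" "extension w \<noteq> extension (parent w)"
    and i: "i < k" "w \<in> set (P i)"
  shows "i \<noteq> i0 \<and> (w \<in> X \<and> \<not> monochromatic i \<or> w \<notin> X \<and> monochromatic i \<and> parent w \<notin> set (P i))"
proof -
  have pV: "parent w \<in> V" using parent_in_vertices w(1,2) .
  have "anchor w" using extension_non_anchor w by blast
  have same_colour: "False" if "monochromatic i" "parent w \<in> set (P i)"
  proof -
    have "anchor (parent w)" using that i(1) unfolding anchor_def by blast
    then show False
      using extension_anchor[OF pV] extension_anchor[OF w(1) \<open>anchor w\<close>] w(3)
        anchor_colour_monochromatic[OF i(1) _ that(1)] that(2) i(2) by simp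
  qed
  show ?thesis
  proof (cases "w \<in> X")
    case True
    then have "\<not> monochromatic i"
      using same_colour parent_of_leaf_on_family_path[OF True i w(2)] by blast
    then show ?thesis using True mono_i0 unfolding monochromatic_def by blast
  next
    case False
    then have "monochromatic i"
      using \<open>anchor w\<close> family_vertices_disjoint i unfolding anchor_def by blast
    moreover have "parent w \<notin> set (P i)" using same_colour calculation by blast
    ultimately show ?thesis using False parent_on_root_family_path i(2) w(2) by blast
  qed
qed

lemma extension_constant_inside_bichromatic:
  assumes i: "i < k" "\<not> monochromatic i"
  shows "\<exists>c. \<forall>v\<in>set (P i). v \<notin> X \<longrightarrow> extension v = c"
proof -
  have root_not_on: "root \<notin> set (P i)"
    using i mono_i0 family_vertices_disjoint[OF i0 i(1)] family_ends_in_set[OF i0]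
    unfolding monochromatic_def by blast
  obtain t where t: "\<forall>v\<in>set (P i). v \<noteq> t \<longrightarrow> v \<noteq> root \<and> parent v \<in> set (P i)"
    using path_has_top family_path[OF i(1)] family_vertices_subset[OF i(1)] by blast
  have "extension v = extension t" if "v \<in> set (P i)" "v \<notin> X" for v
    using that
  proof (induction "length (root_path v)" arbitrary: v rule: less_induct)
    case less
    show ?case
    proof (cases "v = t")
      case False
      then have v: "v \<noteq> root" "parent v \<in> set (P i)" "v \<in> V"
        using t less.prems family_vertices_subset[OF i(1)] by blast+
      have "\<not> anchor v"
        using less.prems i family_vertices_disjoint unfolding anchor_def by blast
      moreover have "parent v \<notin> X"
        using parent_leaf_eq_root v root_not_on by metis
      ultimately show ?thesis
        using less.hyps[OF length_root_path_parent[OF v(3,1)] v(2)] extension_non_anchor v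
        by simp
    qed simp
  qed
  then show ?thesis by blast
qed

lemma changing_child_unique:
  assumes w1: "w1 \<in> V" "w1 \<noteq> root" "extension w1 \<noteq> extension (parent w1)"
    and w2: "w2 \<in> V" "w2 \<noteq> root" "extension w2 \<noteq> extension (parent w2)"
    and i: "i < k" "w1 \<in> set (P i)" "w2 \<in> set (P i)"
  shows "w1 = w2"
proof (cases "monochromatic i")
  case True
  \<comment> \<open>the changing child of a monochromatic path is its vertex closest to the root\<close>
  obtain t where "\<forall>v\<in>set (P i). v \<noteq> t \<longrightarrow> v \<noteq> root \<and> parent v \<in> set (P i)"
    using path_has_top family_path[OF i(1)] family_vertices_subset[OF i(1)] by blast
  then show ?thesis
    using changing_child_cases[OF w1 i(1,2)] changing_child_cases[OF w2 i(1,3)] True i by metis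
next
  case False
  \<comment> \<open>both are ends of a bichromatic path whose interior has constant colour c\<close>
  then have X: "w1 \<in> X" "w2 \<in> X"
    using changing_child_cases[OF w1 i(1,2)] changing_child_cases[OF w2 i(1,3)] by blast+
  obtain c where c: "\<forall>v\<in>set (P i). v \<notin> X \<longrightarrow> extension v = c"
    using extension_constant_inside_bichromatic[OF i(1) False] by blast
  have "parent w1 \<notin> X" "parent w2 \<notin> X"
    using parent_leaf_eq_root parent_of_leaf_on_family_path changing_child_cases X w1 w2 i
      family_vertices_disjoint[OF i0 i(1)] family_ends_in_set[OF i0] by metis+
  then have "extension w1 \<noteq> c" "extension w2 \<noteq> c"
    using c parent_of_leaf_on_family_path X w1 w2 i by metis+
  then have "f w1 = f w2" using extension_leaf X by auto
  then show ?thesis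
    using False leaf_on_family_path[OF i(1)] X i unfolding monochromatic_def by metis
qed

lemma changes_extension_le: "changes E extension \<le> k - 1"
proof -
  let ?C = "{w \<in> V. w \<noteq> root \<and> extension w \<noteq> extension (parent w)}"
  have index: "path_index w < k \<and> w \<in> set (P (path_index w))" if "w \<in> ?C" for w
  proof -
    have "anchor w" using that extension_non_anchor by blast
    then obtain i where "i < k" "w \<in> set (P i)" using anchor_on_family_path by blast
    then show ?thesis using path_index_eq by simp
  qed
  have "path_index w \<in> {..<k} - {i0}" if "w \<in> ?C" for w
    using changing_child_cases index[OF that] that by blast
  moreover have "inj_on path_index ?C"
  proof (rule inj_onI)
    fix w1 w2 assume w: "w1 \<in> ?C" "w2 \<in> ?C" "path_index w1 = path_index w2"
    have "path_index w1 < k" "w1 \<in> set (P (path_index w1))" "w2 \<in> set (P (path_index w2))"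
      using index w(1,2) by blast+
    then show "w1 = w2"
      using changing_child_unique[of w1 w2 "path_index w1"] w by simp
  qed
  ultimately have "card ?C \<le> card ({..<k} - {i0})"
    by (intro card_inj_on_le) auto
  then show ?thesis
    using changes_le_card_changing_children[of extension] i0 by simp
qed

end

definition bichromatic_characters :: "'v set \<Rightarrow> 'v set set \<Rightarrow> ('v \<Rightarrow> bool) set" where
  "bichromatic_characters X M = {f \<in> X \<rightarrow>\<^sub>E (UNIV :: bool set). \<forall>e\<in>M. \<exists>x\<in>e. \<exists>y\<in>e. f x \<noteq> f y}"

lemma bichromatic_character_true_on_two_blocks:
  assumes M: "partition_on X M" "\<forall>e\<in>M. card e = 2"
    and ab: "a \<in> X" "b \<in> X" "\<forall>e\<in>M. a \<in> e \<longrightarrow> b \<notin> e"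
  shows "\<exists>f\<in>bichromatic_characters X M. f a \<and> f b"
proof -
  \<comment> \<open>f is True on exactly one marked element of each pair, with a and b marked\<close>
  define mark where "mark e = (if a \<in> e then a else if b \<in> e then b else SOME x. x \<in> e)" for e
  define f where "f z = (if z \<in> X then z \<in> mark ` M else undefined)" for z
  have mark: "mark e \<in> e" if "e \<in> M" for e
    using that partition_onD3[OF M(1)] unfolding mark_def by (auto simp: some_in_eq)
  have unique: "e = e'" if "e \<in> M" "e' \<in> M" "x \<in> e" "x \<in> e'" for e e' x
    using that disjointD[OF partition_onD2[OF M(1)]] by blast
  have "\<exists>x\<in>e. \<exists>y\<in>e. f x \<noteq> f y" if e: "e \<in> M" for e
  proof -
    obtain y where y: "y \<in> e" "y \<noteq> mark e"
      using M(2) e mark[OF e] by (metis card_2_iff insertCI)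
    have "e \<subseteq> X" using M(1) e by (auto simp: partition_on_def)
    moreover have "y \<notin> mark ` M"
      using unique[OF e _ y(1)] mark y(2) by blast
    ultimately have "f (mark e) \<noteq> f y"
      using mark[OF e] y(1) e unfolding f_def by auto
    then show ?thesis using mark[OF e] y(1) by blast
  qed
  then have "f \<in> bichromatic_characters X M"
    unfolding bichromatic_characters_def f_def by auto
  moreover have "f a \<and> f b"
  proof -
    obtain ea eb where eab: "ea \<in> M" "a \<in> ea" "eb \<in> M" "b \<in> eb"
      using M(1) ab(1,2) by (auto simp: partition_on_def)
    then have "mark ea = a" "mark eb = b" unfolding mark_def using ab(3) by auto
    then show ?thesis using eab ab(1,2) unfolding f_def by force
  qed
  ultimately show ?thesis by blast
qed

lemma pairing_subset_if_bichromatic_characters_subset: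
  assumes M: "partition_on X M" "\<forall>e\<in>M. card e = 2"
    and M': "partition_on X M'" "\<forall>e\<in>M'. card e = 2"
    and sub: "bichromatic_characters X M' \<subseteq> bichromatic_characters X M"
  shows "M \<subseteq> M'"
proof
  fix e assume e: "e \<in> M"
  then obtain a b where ab: "e = {a, b}" "a \<noteq> b"
    using M(2) by (meson card_2_iff)
  have X: "a \<in> X" "b \<in> X" using M(1) e ab by (auto simp: partition_on_def)
  show "e \<in> M'"
  proof (rule ccontr)
    assume "e \<notin> M'"
    have apart: "\<forall>e'\<in>M'. a \<in> e' \<longrightarrow> b \<notin> e'"
    proof (intro ballI impI notI)
      fix e' assume e': "e' \<in> M'" "a \<in> e'" "b \<in> e'"
      then have "e \<subseteq> e'" using ab by blast
      moreover have "finite e'" "card e' = card e"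
        using M'(2) e'(1) M(2) e by (auto intro: card_ge_0_finite)
      ultimately have "e' = e" using card_subset_eq by metis
      then show False using e'(1) \<open>e \<notin> M'\<close> by simp
    qed
    obtain f where "f \<in> bichromatic_characters X M'" "f a" "f b"
      using bichromatic_character_true_on_two_blocks[OF M' X apart] by blast
    then have "f \<in> bichromatic_characters X M" using sub by blast
    then obtain x y where "x \<in> e" "y \<in> e" "f x \<noteq> f y"
      using e unfolding bichromatic_characters_def by blast
    then show False using ab \<open>f a\<close> \<open>f b\<close> by auto
  qed
qed

context leaf_path_family
begin

lemma parsimony_score_less_if_monochromatic:
  assumes "i < k" "f (hd (P i)) = f (last (P i))"
  shows "parsimony_score X E f < k"
proof -
  interpret monochromatic_pair X V E k P f i
    using assms by unfold_locales
  have "parsimony_score X E f \<le> changes E extension"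
    unfolding parsimony_score_def using extension_leaf by (intro Least_le) blast
  then show ?thesis using changes_extension_le assms(1) by simp
qed

lemma A_k_eq_bichromatic_characters: "A_k k X E = bichromatic_characters X (endpoint_pairs k P)"
proof -
  have score_iff: "parsimony_score X E f = k \<longleftrightarrow> (\<forall>i<k. f (hd (P i)) \<noteq> f (last (P i)))" for f
  proof
    show "\<forall>i<k. f (hd (P i)) \<noteq> f (last (P i))" if "parsimony_score X E f = k"
      using parsimony_score_less_if_monochromatic that by (metis less_irrefl)
  qed (rule parsimony_score_eq_if_bichromatic)
  have pairs_iff: "(\<forall>i<k. f (hd (P i)) \<noteq> f (last (P i))) \<longleftrightarrow>
      (\<forall>e\<in>endpoint_pairs k P. \<exists>x\<in>e. \<exists>y\<in>e. f x \<noteq> f y)" for f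
  proof
    show "\<forall>i<k. f (hd (P i)) \<noteq> f (last (P i))"
      if "\<forall>e\<in>endpoint_pairs k P. \<exists>x\<in>e. \<exists>y\<in>e. f x \<noteq> f y"
    proof (intro allI impI)
      fix i assume "i < k"
      then have "{hd (P i), last (P i)} \<in> endpoint_pairs k P" unfolding endpoint_pairs_def by blast
      then show "f (hd (P i)) \<noteq> f (last (P i))" using that by auto
    qed
  qed (auto simp: endpoint_pairs_def)
  show ?thesis
    unfolding A_k_def bichromatic_characters_def score_iff pairs_iff ..
qed

end

theorem proposition5:
  fixes X V V' :: "'v set" and E E' :: "'v set set" and k :: nat
    and P P' :: "nat \<Rightarrow> 'v list"
  assumes "k \<ge> 1"
    and "binary_phylo_tree X V E" and "binary_phylo_tree X V' E'"
    and "card X = 2 * k"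
    and "edge_disjoint_l2l_family X E k P"
    and "edge_disjoint_l2l_family X E' k P'"
  shows "A_k k X E = A_k k X E' \<longleftrightarrow> endpoint_pairs k P = endpoint_pairs k P'"
proof -
  interpret T: leaf_path_family X V E k P
    using assms by unfold_locales
  interpret T': leaf_path_family X V' E' k P'
    using assms by unfold_locales
  show ?thesis
    unfolding T.A_k_eq_bichromatic_characters T'.A_k_eq_bichromatic_characters
    using pairing_subset_if_bichromatic_characters_subset
      T.endpoint_pairs_partition T'.endpoint_pairs_partition
    by (metis dual_order.eq_iff)
qed

end
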